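(* If $f\in\mathcal P_s$ and $g\in\mathcal P_r$, then $\{f,g\}\in\mathcal P_{r+s-2}$, and $$ \|\{f,g\}\|_+\le 2^4\,\Omega\,r\,s\,\min(r,s)\,\|f\|_+\|g\|_+ , $$ where $\Omega=\sqrt{2K(m_1+m_2)/(m_1m_2)}$.
   Context: Normal modes of a diatomic chain of $N$ cells with masses $m_1>m_2>0$ and harmonic constant $K>0$: let $\mathcal K_N=\{\lfloor-N/2\rfloor+1,\dots,\lfloor N/2\rfloor\}$; for $k\in\mathcal K_N$, $\kappa=2\pi k/N$, $\Delta_k=m_1^2+m_2^2+2m_1m_2\cos\kappa$, $\omega_k^\pm=\big(K\frac{m_1+m_2\pm\sqrt{\Delta_k}}{m_1m_2}\big)^{1/2}$, $\Omega=\omega_0^+$. The complex normal-mode coordinates $\hat q_k^l,\hat p_k^l$ ($k\in\mathcal K_N$, $l=\pm$) are canonical, $\{\hat q_k^l,\hat p_{k'}^{l'}\}=\delta_{k,k'}\delta_{l,l'}$, with $\hat q^l_{-k}=\overline{\hat q^l_k}$, $\hat p^l_{-k}=\overline{\hat p^l_k}$ (indices $k$ taken mod $N$ in $\mathcal K_N$). Polynomial classes. Put $\xi_k^l=(\hat p_k^l+i\omega_k^l\hat q_{-k}^l)/\sqrt2$, $\eta_k^l=(\hat p_{-k}^l-i\omega_k^l\hat q_k^l)/\sqrt2$, so that $\{\xi_k^l,\eta_{k'}^{l'}\}=i\omega_k^l\delta_{k,k'}\delta_{l,l'}$. For $\sigma\in\{\pm1\}^s$, $k\in\mathcal K_N^s$,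 $l\in\{+,-\}^s$ let $\Xi^s_{\sigma,k,l}=\prod_{j=1}^s(\xi^{l_j}_{k_j})^{(1+\sigma_j)/2}(\eta^{l_j}_{k_j})^{(1-\sigma_j)/2}$. Let $\mathcal I_s$ be the set of tuples $(\sigma,\tilde\tau,k,l,n)$ with $\sigma,\tilde\tau\in\{\pm1\}^s$, $k\in\mathcal K_N^s$, $l\in\{+,-\}^s$, $n\in\mathbb Z$ with $\lfloor-(s-1)/2\rfloor\le n\le\lfloor(s-1)/2\rfloor$, and write $\delta^n_j=\delta_{j,nN}$. $\mathcal P_s$ is the space of functions of the form $f=N^{-(s-2)/2}\sum_{(\sigma,\tilde\tau,k,l,n)\in\mathcal I_s}f_{\sigma,\tilde\tau,l,n}\big(\tfrac{k_1}N,\dots,\tfrac{k_s}N\big)\,\Xi^s_{\sigma,k,l}\,\delta^n_{\tilde\tau\cdot k}$ with continuous coefficient functions $f_{\sigma,\tilde\tau,l,n}:[-1,1]^s\to\mathbb C$, normed by $\|f\|_+=\max_{(\sigma,\tilde\tau,k,l,n)\in\mathcal I_s}\big|f_{\sigma,\tilde\tau,l,n}(k_1/N,\dots,k_s/N)\big|\,\delta^n_{\tilde\tau\cdot k}$. *)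

theory Defs
  imports "HOL-Analysis.Analysis"
begin

text \<open>Diatomic chain of N cells, masses m1 > m2 > 0, spring constant K > 0.
  Phase-space coordinates: the complex normal-mode coordinates q_k^l, p_k^l
  (k in K_N, l = + (True) or - (False)).  Functions are modelled as functions
  of the independent complex variables (holomorphic extension); the reality
  conditions cut out a totally real subspace on which polynomials are
  determined, and the canonical Poisson bracket is computed with complex
  partial derivatives.\<close>

datatype var = Qv int bool | Pv int bool

type_synonym point = "var \<Rightarrow> complex"

definition KN_lo :: "nat \<Rightarrow> int" where "KN_lo N = (- int N) div 2 + 1"
definition KN_hi :: "nat \<Rightarrow> int" where "KN_hi N = int N div 2"
definition KN :: "nat \<Rightarrow> int set" where "KN N = {KN_lo N .. KN_hi N}"

definition red :: "nat \<Rightarrow> int \<Rightarrow> int" where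
  "red N k = (k - KN_lo N) mod int N + KN_lo N"

definition Delta :: "real \<Rightarrow> real \<Rightarrow> nat \<Rightarrow> int \<Rightarrow> real" where
  "Delta m1 m2 N k = m1\<^sup>2 + m2\<^sup>2 + 2 * m1 * m2 * cos (2 * pi * real_of_int k / real N)"

definition omega :: "real \<Rightarrow> real \<Rightarrow> real \<Rightarrow> nat \<Rightarrow> bool \<Rightarrow> int \<Rightarrow> real" where
  "omega K m1 m2 N l k =
     sqrt (K * (m1 + m2 + (if l then 1 else -1) * sqrt (Delta m1 m2 N k)) / (m1 * m2))"

definition xi :: "real \<Rightarrow> real \<Rightarrow> real \<Rightarrow> nat \<Rightarrow> bool \<Rightarrow> int \<Rightarrow> point \<Rightarrow> complex" where
  "xi K m1 m2 N l k z =
     (z (Pv k l) + \<i> * complex_of_real (omega K m1 m2 N l k) * z (Qv (red N (- k)) l))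
       / complex_of_real (sqrt 2)"

definition eta :: "real \<Rightarrow> real \<Rightarrow> real \<Rightarrow> nat \<Rightarrow> bool \<Rightarrow> int \<Rightarrow> point \<Rightarrow> complex" where
  "eta K m1 m2 N l k z =
     (z (Pv (red N (- k)) l) - \<i> * complex_of_real (omega K m1 m2 N l k) * z (Qv k l))
       / complex_of_real (sqrt 2)"

definition pd :: "var \<Rightarrow> (point \<Rightarrow> complex) \<Rightarrow> point \<Rightarrow> complex" where
  "pd v f z = deriv (\<lambda>t. f (z(v := t))) (z v)"

definition pbracket :: "nat \<Rightarrow> (point \<Rightarrow> complex) \<Rightarrow> (point \<Rightarrow> complex) \<Rightarrow> point \<Rightarrow> complex" where
  "pbracket N f g z =
     (\<Sum>k\<in>KN N. \<Sum>l\<in>(UNIV::bool set).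
        pd (Qv k l) f z * pd (Pv k l) g z - pd (Pv k l) f z * pd (Qv k l) g z)"

text \<open>Tuples of length s are functions on {..<s} (extensional).
  sigma j = True means sigma_j = +1; tau likewise; l j = True means l_j = +.\<close>

definition Xi :: "real \<Rightarrow> real \<Rightarrow> real \<Rightarrow> nat \<Rightarrow> nat \<Rightarrow> (nat \<Rightarrow> bool) \<Rightarrow> (nat \<Rightarrow> int)
                  \<Rightarrow> (nat \<Rightarrow> bool) \<Rightarrow> point \<Rightarrow> complex" where
  "Xi K m1 m2 N s \<sigma> k l z =
     (\<Prod>j<s. if \<sigma> j then xi K m1 m2 N (l j) (k j) z else eta K m1 m2 N (l j) (k j) z)"

definition tdot :: "nat \<Rightarrow> (nat \<Rightarrow> bool) \<Rightarrow> (nat \<Rightarrow> int) \<Rightarrow> int" where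
  "tdot s \<tau> k = (\<Sum>j<s. (if \<tau> j then 1 else -1) * k j)"

definition nlo :: "nat \<Rightarrow> int" where "nlo s = \<lfloor>- (real s - 1) / 2\<rfloor>"
definition nhi :: "nat \<Rightarrow> int" where "nhi s = \<lfloor>(real s - 1) / 2\<rfloor>"

definition signs :: "nat \<Rightarrow> (nat \<Rightarrow> bool) set" where
  "signs s = {..<s} \<rightarrow>\<^sub>E (UNIV :: bool set)"

definition ktuples :: "nat \<Rightarrow> nat \<Rightarrow> (nat \<Rightarrow> int) set" where
  "ktuples N s = {..<s} \<rightarrow>\<^sub>E KN N"

definition kvec :: "nat \<Rightarrow> nat \<Rightarrow> (nat \<Rightarrow> int) \<Rightarrow> (nat \<Rightarrow> real)" where
  "kvec N s k = (\<lambda>j. if j < s then real_of_int (k j) / real N else undefined)"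

definition cube :: "nat \<Rightarrow> (nat \<Rightarrow> real) set" where
  "cube s = {..<s} \<rightarrow>\<^sub>E {-1..1}"

type_synonym coeffs = "(nat \<Rightarrow> bool) \<Rightarrow> (nat \<Rightarrow> bool) \<Rightarrow> (nat \<Rightarrow> bool) \<Rightarrow> int \<Rightarrow> (nat \<Rightarrow> real) \<Rightarrow> complex"

definition is_coeffs :: "nat \<Rightarrow> coeffs \<Rightarrow> bool" where
  "is_coeffs s F \<longleftrightarrow> (\<forall>\<sigma> \<tau> l n. continuous_on (cube s) (F \<sigma> \<tau> l n))"

definition delta_n :: "nat \<Rightarrow> int \<Rightarrow> int \<Rightarrow> real" where
  "delta_n N n j = (if j = n * int N then 1 else 0)"

definition polyP :: "real \<Rightarrow> real \<Rightarrow> real \<Rightarrow> nat \<Rightarrow> nat \<Rightarrow> coeffs \<Rightarrow> point \<Rightarrow> complex" where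
  "polyP K m1 m2 N s F z =
     complex_of_real (real N powr (- (real s - 2) / 2)) *
     (\<Sum>\<sigma>\<in>signs s. \<Sum>\<tau>\<in>signs s. \<Sum>k\<in>ktuples N s. \<Sum>l\<in>signs s. \<Sum>n\<in>{nlo s .. nhi s}.
        F \<sigma> \<tau> l n (kvec N s k) * Xi K m1 m2 N s \<sigma> k l z
          * complex_of_real (delta_n N n (tdot s \<tau> k)))"

definition normplus :: "nat \<Rightarrow> nat \<Rightarrow> coeffs \<Rightarrow> real" where
  "normplus N s F = Max (insert 0
     ((\<lambda>(\<sigma>, \<tau>, k, l, n). cmod (F \<sigma> \<tau> l n (kvec N s k)) * delta_n N n (tdot s \<tau> k))
        ` (signs s \<times> signs s \<times> ktuples N s \<times> signs s \<times> {nlo s .. nhi s})))"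

definition in_P :: "real \<Rightarrow> real \<Rightarrow> real \<Rightarrow> nat \<Rightarrow> nat \<Rightarrow> (point \<Rightarrow> complex) \<Rightarrow> bool" where
  "in_P K m1 m2 N s f \<longleftrightarrow> (\<exists>F. is_coeffs s F \<and> f = polyP K m1 m2 N s F)"

end

theory Submission
  imports Defs
begin

text \<open>Both polynomials are linear combinations of monomials in the coordinates xi and eta,
  whose only non-vanishing brackets are those between xi(k,l) and eta(k,l), equal to
  +-i omega(k,l). By the Leibniz rule the bracket of two monomials of degrees s and r is a sum,
  over the pairs (j, i) of contracted positions, of +-i omega times the monomial of degree
  r + s - 2 formed by the remaining factors. The momentum constraint tau.k = nN survives with
  re-signed tau, and when the new n leaves its admissible range (by one) flipping the sign of a
  coordinate with 2k = N repairs it. Collecting the terms with equal resulting index, a given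
  index arises from at most 2^4 r s min(r, s) contractions: the contraction is determined by
  (j, i, sigma_j, l_j, tau_j, tau'_i) and the flip bit, and l_j is forced to be + when
  min(r, s) = 1, because then k_j = 0 and omega(0,-) = 0. Each contribution is bounded by
  Omega |f|_+ |g|_+. Continuous coefficient functions taking the collected values at the
  lattice points are built from tent functions.\<close>

section \<open>Partial derivatives and the Poisson bracket\<close>

definition coordwise_differentiable :: "(point \<Rightarrow> complex) \<Rightarrow> bool" where
  "coordwise_differentiable f \<longleftrightarrow> (\<forall>z v. (\<lambda>t. f (z(v := t))) field_differentiable (at (z v)))"

lemma coordwise_differentiable_const [simp]: "coordwise_differentiable (\<lambda>z. c)"
  by (simp add: coordwise_differentiable_def)

lemma coordwise_differentiable_coord [simp]: "coordwise_differentiable (\<lambda>z. z w)"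
  unfolding coordwise_differentiable_def
proof (intro allI)
  fix z :: point and v
  show "(\<lambda>t. (z(v := t)) w) field_differentiable (at (z v))"
    by (cases "v = w") (auto intro: field_differentiable_ident field_differentiable_const)
qed

lemma coordwise_differentiable_add:
  "coordwise_differentiable f \<Longrightarrow> coordwise_differentiable g \<Longrightarrow> coordwise_differentiable (\<lambda>z. f z + g z)"
  unfolding coordwise_differentiable_def by (auto intro: field_differentiable_add)

lemma coordwise_differentiable_mult:
  "coordwise_differentiable f \<Longrightarrow> coordwise_differentiable g \<Longrightarrow> coordwise_differentiable (\<lambda>z. f z * g z)"
  unfolding coordwise_differentiable_def by (auto intro: field_differentiable_mult)

lemma coordwise_differentiable_cmult:
  "coordwise_differentiable f \<Longrightarrow> coordwise_differentiable (\<lambda>z. c * f z)"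
  using coordwise_differentiable_mult[OF coordwise_differentiable_const] by blast

lemma coordwise_differentiable_sum:
  "(\<And>a. a \<in> A \<Longrightarrow> coordwise_differentiable (f a)) \<Longrightarrow> coordwise_differentiable (\<lambda>z. \<Sum>a\<in>A. f a z)"
  by (induction A rule: infinite_finite_induct) (simp_all add: coordwise_differentiable_add)

lemma coordwise_differentiable_prod:
  "(\<And>a. a \<in> A \<Longrightarrow> coordwise_differentiable (f a)) \<Longrightarrow> coordwise_differentiable (\<lambda>z. \<Prod>a\<in>A. f a z)"
  by (induction A rule: infinite_finite_induct) (simp_all add: coordwise_differentiable_mult)

lemma pd_const [simp]: "pd v (\<lambda>z. c) z = 0"
  unfolding pd_def by simp

lemma pd_coord: "pd v (\<lambda>z. z w) z = (if v = w then 1 else 0)"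
  unfolding pd_def by (cases "v = w") auto

lemma pd_add:
  "coordwise_differentiable f \<Longrightarrow> coordwise_differentiable g \<Longrightarrow>
   pd v (\<lambda>z. f z + g z) z = pd v f z + pd v g z"
  unfolding coordwise_differentiable_def pd_def by simp

lemma pd_mult:
  "coordwise_differentiable f \<Longrightarrow> coordwise_differentiable g \<Longrightarrow>
   pd v (\<lambda>z. f z * g z) z = pd v f z * g z + f z * pd v g z"
  unfolding coordwise_differentiable_def pd_def by simp

lemma pd_cmult: "coordwise_differentiable f \<Longrightarrow> pd v (\<lambda>z. c * f z) z = c * pd v f z"
  using pd_mult[OF coordwise_differentiable_const, of f v c z] by simp

lemma pd_sum:
  "(\<And>a. a \<in> A \<Longrightarrow> coordwise_differentiable (f a)) \<Longrightarrow>
   pd v (\<lambda>z. \<Sum>a\<in>A. f a z) z = (\<Sum>a\<in>A. pd v (f a) z)"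
proof (induction A rule: infinite_finite_induct)
  case (insert x F)
  have "pd v (\<lambda>z. f x z + (\<Sum>a\<in>F. f a z)) z = pd v (f x) z + pd v (\<lambda>z. \<Sum>a\<in>F. f a z) z"
    using insert by (intro pd_add) (auto intro: coordwise_differentiable_sum)
  then show ?case using insert by simp
qed simp_all

lemma pd_lincomb:
  "(\<And>a. a \<in> A \<Longrightarrow> coordwise_differentiable (f a)) \<Longrightarrow>
   pd v (\<lambda>z. \<Sum>a\<in>A. c a * f a z) z = (\<Sum>a\<in>A. c a * pd v (f a) z)"
  by (subst pd_sum) (auto intro: coordwise_differentiable_cmult simp: pd_cmult)

lemma pd_prod:
  assumes "finite A" "\<And>a. a \<in> A \<Longrightarrow> coordwise_differentiable (f a)"
  shows "pd v (\<lambda>z. \<Prod>a\<in>A. f a z) z = (\<Sum>a\<in>A. pd v (f a) z * (\<Prod>b\<in>A - {a}. f b z))"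
  using assms
proof (induction A rule: finite_induct)
  case (insert x F)
  have "pd v (\<lambda>z. f x z * (\<Prod>a\<in>F. f a z)) z
      = pd v (f x) z * (\<Prod>a\<in>F. f a z) + f x z * pd v (\<lambda>z. \<Prod>a\<in>F. f a z) z"
    using insert by (intro pd_mult) (auto intro: coordwise_differentiable_prod)
  also have "\<dots> = pd v (f x) z * (\<Prod>a\<in>F. f a z) + (\<Sum>a\<in>F. pd v (f a) z * (f x z * (\<Prod>b\<in>F - {a}. f b z)))"
    using insert by (simp add: sum_distrib_left algebra_simps)
  also have "\<dots> = (\<Sum>a\<in>insert x F. pd v (f a) z * (\<Prod>b\<in>insert x F - {a}. f b z))"
  proof -
    have "(\<Prod>b\<in>insert x F - {a}. f b z) = f x z * (\<Prod>b\<in>F - {a}. f b z)" if "a \<in> F" for a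
    proof -
      have "insert x F - {a} = insert x (F - {a})" using insert that by auto
      then show ?thesis using insert by simp
    qed
    moreover have "insert x F - {x} = F" using insert by auto
    ultimately show ?thesis using insert by simp
  qed
  finally show ?case using insert by simp
qed simp

lemma sum_swap_pairs:
  "(\<Sum>k\<in>K. \<Sum>l\<in>L. \<Sum>a\<in>A. \<Sum>b\<in>B. f k l a b) = (\<Sum>a\<in>A. \<Sum>b\<in>B. \<Sum>k\<in>K. \<Sum>l\<in>L. f k l a b)"
proof -
  have inner: "(\<Sum>l\<in>L. \<Sum>a\<in>A. \<Sum>b\<in>B. f k l a b) = (\<Sum>a\<in>A. \<Sum>b\<in>B. \<Sum>l\<in>L. f k l a b)" for k
    by (subst sum.swap) (rule sum.cong[OF refl], rule sum.swap)
  have "(\<Sum>k\<in>K. \<Sum>a\<in>A. \<Sum>b\<in>B. \<Sum>l\<in>L. f k l a b) = (\<Sum>a\<in>A. \<Sum>b\<in>B. \<Sum>k\<in>K. \<Sum>l\<in>L. f k l a b)"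
    by (subst sum.swap) (rule sum.cong[OF refl], rule sum.swap)
  then show ?thesis by (simp only: inner)
qed

lemma pbracket_lincomb:
  assumes "\<And>a. a \<in> A \<Longrightarrow> coordwise_differentiable (f a)"
    and "\<And>b. b \<in> B \<Longrightarrow> coordwise_differentiable (g b)"
  shows "pbracket N (\<lambda>z. \<Sum>a\<in>A. c a * f a z) (\<lambda>z. \<Sum>b\<in>B. d b * g b z) z
     = (\<Sum>a\<in>A. \<Sum>b\<in>B. c a * d b * pbracket N (f a) (g b) z)"
proof -
  have dA: "pd v (\<lambda>z. \<Sum>a\<in>A. c a * f a z) z = (\<Sum>a\<in>A. c a * pd v (f a) z)" for v
    using assms(1) by (rule pd_lincomb)
  have dB: "pd v (\<lambda>z. \<Sum>b\<in>B. d b * g b z) z = (\<Sum>b\<in>B. d b * pd v (g b) z)" for v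
    using assms(2) by (rule pd_lincomb)
  have "pbracket N (\<lambda>z. \<Sum>a\<in>A. c a * f a z) (\<lambda>z. \<Sum>b\<in>B. d b * g b z) z
    = (\<Sum>k\<in>KN N. \<Sum>l\<in>UNIV. \<Sum>a\<in>A. \<Sum>b\<in>B. c a * pd (Qv k l) (f a) z * (d b * pd (Pv k l) (g b) z)
         - c a * pd (Pv k l) (f a) z * (d b * pd (Qv k l) (g b) z))"
    unfolding pbracket_def dA dB
      sum_product sum_subtractf[symmetric] by (simp only: mult.assoc)
  also have "\<dots> = (\<Sum>k\<in>KN N. \<Sum>l\<in>UNIV. \<Sum>a\<in>A. \<Sum>b\<in>B. c a * d b *
        (pd (Qv k l) (f a) z * pd (Pv k l) (g b) z - pd (Pv k l) (f a) z * pd (Qv k l) (g b) z))"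
    by (intro sum.cong refl) (simp add: algebra_simps)
  also have "\<dots> = (\<Sum>a\<in>A. \<Sum>b\<in>B. c a * d b * pbracket N (f a) (g b) z)"
    unfolding pbracket_def sum_distrib_left by (rule sum_swap_pairs)
  finally show ?thesis .
qed

lemma pbracket_prod:
  assumes "finite A" "finite B"
    and "\<And>a. a \<in> A \<Longrightarrow> coordwise_differentiable (f a)"
    and "\<And>b. b \<in> B \<Longrightarrow> coordwise_differentiable (g b)"
  shows "pbracket N (\<lambda>z. \<Prod>a\<in>A. f a z) (\<lambda>z. \<Prod>b\<in>B. g b z) z
     = (\<Sum>a\<in>A. \<Sum>b\<in>B. pbracket N (f a) (g b) z * (\<Prod>a'\<in>A - {a}. f a' z) * (\<Prod>b'\<in>B - {b}. g b' z))"
proof -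
  have dA: "pd v (\<lambda>z. \<Prod>a\<in>A. f a z) z = (\<Sum>a\<in>A. pd v (f a) z * (\<Prod>a'\<in>A - {a}. f a' z))" for v
    using assms(1,3) by (rule pd_prod)
  have dB: "pd v (\<lambda>z. \<Prod>b\<in>B. g b z) z = (\<Sum>b\<in>B. pd v (g b) z * (\<Prod>b'\<in>B - {b}. g b' z))" for v
    using assms(2,4) by (rule pd_prod)
  have "pbracket N (\<lambda>z. \<Prod>a\<in>A. f a z) (\<lambda>z. \<Prod>b\<in>B. g b z) z
    = (\<Sum>k\<in>KN N. \<Sum>l\<in>UNIV. \<Sum>a\<in>A. \<Sum>b\<in>B.
        pd (Qv k l) (f a) z * (\<Prod>a'\<in>A - {a}. f a' z) * (pd (Pv k l) (g b) z * (\<Prod>b'\<in>B - {b}. g b' z))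
      - pd (Pv k l) (f a) z * (\<Prod>a'\<in>A - {a}. f a' z) * (pd (Qv k l) (g b) z * (\<Prod>b'\<in>B - {b}. g b' z)))"
    unfolding pbracket_def dA dB
      sum_product sum_subtractf[symmetric] by (rule refl)
  also have "\<dots> = (\<Sum>k\<in>KN N. \<Sum>l\<in>UNIV. \<Sum>a\<in>A. \<Sum>b\<in>B.
        (pd (Qv k l) (f a) z * pd (Pv k l) (g b) z - pd (Pv k l) (f a) z * pd (Qv k l) (g b) z)
         * (\<Prod>a'\<in>A - {a}. f a' z) * (\<Prod>b'\<in>B - {b}. g b' z))"
    by (intro sum.cong refl) (simp add: algebra_simps)
  also have "\<dots> = (\<Sum>a\<in>A. \<Sum>b\<in>B. pbracket N (f a) (g b) z * (\<Prod>a'\<in>A - {a}. f a' z) * (\<Prod>b'\<in>B - {b}. g b' z))"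
    unfolding pbracket_def sum_distrib_right by (rule sum_swap_pairs)
  finally show ?thesis .
qed

lemma finite_KN [simp]: "finite (KN N)"
  by (simp add: KN_def)

lemma KN_hi_eq: "N \<ge> 1 \<Longrightarrow> KN_hi N = KN_lo N + int N - 1"
  unfolding KN_hi_def KN_lo_def by linarith

lemma red_in_KN: assumes "N \<ge> 1" shows "red N k \<in> KN N"
proof -
  have "0 \<le> (k - KN_lo N) mod int N" "(k - KN_lo N) mod int N < int N" using assms by auto
  then show ?thesis unfolding red_def KN_def using KN_hi_eq[OF assms] by auto
qed

lemma red_KN: assumes "N \<ge> 1" "k \<in> KN N" shows "red N k = k"
proof -
  have "0 \<le> k - KN_lo N" "k - KN_lo N < int N"
    using assms KN_hi_eq[OF assms(1)] unfolding KN_def by auto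
  then show ?thesis unfolding red_def by simp
qed

lemma red_mod: "red N k mod int N = k mod int N"
  unfolding red_def by (simp add: mod_simps)

lemma red_eq_iff: "red N a = red N b \<longleftrightarrow> a mod int N = b mod int N"
  by (metis mod_diff_left_eq red_def red_mod)

lemma KN_eq_if_mod_eq:
  "N \<ge> 1 \<Longrightarrow> k \<in> KN N \<Longrightarrow> k' \<in> KN N \<Longrightarrow> k mod int N = k' mod int N \<Longrightarrow> k = k'"
  using red_eq_iff red_KN by metis

lemma red_minus_eq_iff:
  assumes "N \<ge> 1" "k \<in> KN N" "k' \<in> KN N"
  shows "red N (- k) = red N (- k') \<longleftrightarrow> k = k'"
  using KN_eq_if_mod_eq[OF assms] red_eq_iff mod_minus_cong[of "- k" N "- k'"] by auto

lemma red_minus_eq_swap: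
  assumes "N \<ge> 1" "k \<in> KN N" "k' \<in> KN N"
  shows "red N (- k) = k' \<longleftrightarrow> k = red N (- k')"
proof -
  have "red N (- k) = k' \<longleftrightarrow> red N (- k) = red N k'"
    using red_KN[OF assms(1,3)] by simp
  also have "\<dots> \<longleftrightarrow> (- k) mod int N = k' mod int N"
    by (rule red_eq_iff)
  also have "\<dots> \<longleftrightarrow> k mod int N = (- k') mod int N"
    by (metis add.inverse_inverse mod_minus_cong)
  also have "\<dots> \<longleftrightarrow> red N k = red N (- k')"
    by (rule red_eq_iff[symmetric])
  finally show ?thesis using red_KN[OF assms(1,2)] by simp
qed

lemma Delta_mod_eq:
  assumes "N \<ge> 1" "a mod int N = b mod int N"
  shows "Delta m1 m2 N a = Delta m1 m2 N b"
proof -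
  obtain j where j: "a = b + j * int N"
    using assms(2) by (metis mod_eqE add.commute diff_add_cancel mult.commute)
  have "2 * pi * real_of_int a / real N = 2 * pi * real_of_int b / real N + (2 * pi) * of_int j"
    using assms(1) by (simp add: j field_simps)
  then show ?thesis
    unfolding Delta_def by (simp add: cos_add)
qed

lemma omega_red_minus: "N \<ge> 1 \<Longrightarrow> omega K m1 m2 N l (red N (- k)) = omega K m1 m2 N l k"
  using Delta_mod_eq[of N "red N (- k)" "- k" m1 m2] by (simp add: red_mod omega_def Delta_def)

lemma Delta_bounds:
  assumes "m1 > 0" "m2 > 0"
  shows "0 \<le> Delta m1 m2 N k" "Delta m1 m2 N k \<le> (m1 + m2)\<^sup>2"
proof -
  let ?c = "cos (2 * pi * real_of_int k / real N)"
  have "-1 \<le> ?c" "?c \<le> 1" by auto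
  then have "2 * (m1 * m2) * (-1) \<le> 2 * (m1 * m2) * ?c" "2 * (m1 * m2) * ?c \<le> 2 * (m1 * m2) * 1"
    using assms by (intro mult_left_mono; simp)+
  moreover have "0 \<le> (m1 - m2)\<^sup>2" by simp
  ultimately show "0 \<le> Delta m1 m2 N k" "Delta m1 m2 N k \<le> (m1 + m2)\<^sup>2"
    unfolding Delta_def by (simp_all add: power2_eq_square algebra_simps)
qed

lemma omega_bounds:
  assumes "m1 > 0" "m2 > 0" "K > 0"
  shows "0 \<le> omega K m1 m2 N l k" "omega K m1 m2 N l k \<le> sqrt (2 * K * (m1 + m2) / (m1 * m2))"
proof -
  define d where "d = sqrt (Delta m1 m2 N k)"
  have "0 \<le> d" "d \<le> m1 + m2"
    using Delta_bounds[OF assms(1,2)] assms real_sqrt_le_mono[of "Delta m1 m2 N k" "(m1 + m2)\<^sup>2"]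
    unfolding d_def by auto
  then have "0 \<le> m1 + m2 + (if l then 1 else -1) * d" "m1 + m2 + (if l then 1 else -1) * d \<le> 2 * (m1 + m2)"
    by (cases l; simp)+
  then show "0 \<le> omega K m1 m2 N l k" "omega K m1 m2 N l k \<le> sqrt (2 * K * (m1 + m2) / (m1 * m2))"
    unfolding omega_def d_def[symmetric] using assms
    by (auto intro!: real_sqrt_le_mono divide_right_mono)
qed

lemma omega_minus_zero:
  assumes "m1 > 0" "m2 > 0"
  shows "omega K m1 m2 N False 0 = 0"
proof -
  have "Delta m1 m2 N 0 = (m1 + m2)\<^sup>2" unfolding Delta_def by (simp add: power2_eq_square algebra_simps)
  then show ?thesis using assms unfolding omega_def by simp
qed

section \<open>Deleting one position from each of two tuples\<close>

definition skip :: "nat \<Rightarrow> nat \<Rightarrow> nat" where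
  "skip j t = (if t < j then t else Suc t)"

definition splice :: "nat \<Rightarrow> nat \<Rightarrow> nat \<Rightarrow> nat \<Rightarrow> (nat \<Rightarrow> 'a) \<Rightarrow> (nat \<Rightarrow> 'a) \<Rightarrow> nat \<Rightarrow> 'a" where
  "splice p q j i a b t =
     (if t < p then a (skip j t) else if t < p + q then b (skip i (t - p)) else undefined)"

lemma skip_less: "j < s \<Longrightarrow> t < s - 1 \<Longrightarrow> skip j t < s"
  unfolding skip_def by auto

lemma bij_betw_skip: assumes "j < s" shows "bij_betw (skip j) {..<s - 1} ({..<s} - {j})"
  unfolding bij_betw_def
proof
  show "inj_on (skip j) {..<s - 1}" unfolding inj_on_def skip_def by auto
  show "skip j ` {..<s - 1} = {..<s} - {j}"
  proof
    show "skip j ` {..<s - 1} \<subseteq> {..<s} - {j}" using assms unfolding skip_def by auto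
  next
    show "{..<s} - {j} \<subseteq> skip j ` {..<s - 1}"
    proof
      fix t assume t: "t \<in> {..<s} - {j}"
      show "t \<in> skip j ` {..<s - 1}"
      proof (cases "t < j")
        case True
        then have "skip j t = t" "t < s - 1" using assms by (auto simp: skip_def)
        then show ?thesis by (metis image_eqI lessThan_iff)
      next
        case False
        then have "skip j (t - 1) = t" "t - 1 < s - 1" using t by (auto simp: skip_def)
        then show ?thesis by (metis image_eqI lessThan_iff)
      qed
    qed
  qed
qed

lemma prod_remove_skip: "j < s \<Longrightarrow> (\<Prod>t\<in>{..<s} - {j}. g t) = (\<Prod>t<s - 1. g (skip j t))"
  using prod.reindex_bij_betw[OF bij_betw_skip, of j s g] by simp

lemma sum_lessThan_skip: "j < s \<Longrightarrow> (\<Sum>t<s. g t) = g j + (\<Sum>t<s - 1. g (skip j t))"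
  using sum.reindex_bij_betw[OF bij_betw_skip, of j s g] sum.remove[of "{..<s}" j g] by simp

lemma sum_lessThan_add:
  fixes p q :: nat
  shows "(\<Sum>t<p + q. g t) = (\<Sum>t<p. g t) + (\<Sum>t<q. g (t + p))"
proof -
  have "(\<Sum>t<p + q. g t) = (\<Sum>t<p. g t) + (\<Sum>t\<in>{p..<p + q}. g t)"
    using sum.atLeastLessThan_concat[of 0 p "p + q" g] by (simp add: lessThan_atLeast0)
  also have "(\<Sum>t\<in>{p..<p + q}. g t) = (\<Sum>t\<in>{0 + p..<q + p}. g t)" by (simp add: add.commute)
  also have "\<dots> = (\<Sum>t<q. g (t + p))" by (simp only: sum.shift_bounds_nat_ivl lessThan_atLeast0)
  finally show ?thesis .
qed

lemma prod_lessThan_add: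
  fixes p q :: nat
  shows "(\<Prod>t<p + q. g t) = (\<Prod>t<p. g t) * (\<Prod>t<q. g (t + p))"
proof -
  have "(\<Prod>t<p + q. g t) = (\<Prod>t<p. g t) * (\<Prod>t\<in>{p..<p + q}. g t)"
    using prod.atLeastLessThan_concat[of 0 p "p + q" g] by (simp add: lessThan_atLeast0)
  also have "(\<Prod>t\<in>{p..<p + q}. g t) = (\<Prod>t\<in>{0 + p..<q + p}. g t)" by (simp add: add.commute)
  also have "\<dots> = (\<Prod>t<q. g (t + p))" by (simp only: prod.shift_bounds_nat_ivl lessThan_atLeast0)
  finally show ?thesis .
qed

lemma splice_PiE:
  "(\<And>t. t < p \<Longrightarrow> a (skip j t) \<in> A) \<Longrightarrow> (\<And>t. t < q \<Longrightarrow> b (skip i t) \<in> A) \<Longrightarrow>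
   splice p q j i a b \<in> {..<p + q} \<rightarrow>\<^sub>E A"
  unfolding splice_def by (auto simp: PiE_iff extensional_def)

lemma splice_eqD:
  assumes "splice p q j i a b = splice p q j i a' b'"
  shows "t < p \<Longrightarrow> a (skip j t) = a' (skip j t)" "t < q \<Longrightarrow> b (skip i t) = b' (skip i t)"
proof -
  show "t < p \<Longrightarrow> a (skip j t) = a' (skip j t)"
    using fun_cong[OF assms, of t] by (simp add: splice_def)
  show "t < q \<Longrightarrow> b (skip i t) = b' (skip i t)"
    using fun_cong[OF assms, of "t + p"] by (simp add: splice_def)
qed

lemma PiE_eq_by_skip:
  assumes "a \<in> {..<s} \<rightarrow>\<^sub>E A" "a' \<in> {..<s} \<rightarrow>\<^sub>E A" "j < s" "a j = a' j"
    and "\<And>t. t < s - 1 \<Longrightarrow> a (skip j t) = a' (skip j t)"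
  shows "a = a'"
proof (rule PiE_ext[OF assms(1,2)])
  fix t assume "t \<in> {..<s}"
  moreover have "t \<in> skip j ` {..<s - 1}" if "t \<in> {..<s}" "t \<noteq> j"
    using bij_betw_skip[OF assms(3)] that unfolding bij_betw_def by auto
  ultimately show "a t = a' t" using assms(4,5) by (cases "t = j") auto
qed

lemma splice_inj:
  assumes "splice (s - 1) (r - 1) j i a a' = splice (s - 1) (r - 1) j i b b'"
    and "a \<in> {..<s} \<rightarrow>\<^sub>E A" "b \<in> {..<s} \<rightarrow>\<^sub>E A" "a' \<in> {..<r} \<rightarrow>\<^sub>E A" "b' \<in> {..<r} \<rightarrow>\<^sub>E A"
    and "j < s" "i < r" "a j = b j" "a' i = b' i"
  shows "a = b" "a' = b'"
  using PiE_eq_by_skip[OF assms(2,3,6,8) splice_eqD(1)[OF assms(1)]]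
    PiE_eq_by_skip[OF assms(4,5,7,9) splice_eqD(2)[OF assms(1)]] by blast+

section \<open>The momentum constraint\<close>

definition sg :: "bool \<Rightarrow> int" where
  "sg b = (if b then 1 else -1)"

lemma tdot_sg: "tdot s \<tau> k = (\<Sum>j<s. sg (\<tau> j) * k j)"
  unfolding tdot_def sg_def ..

lemma tdot_splice:
  "tdot (p + q) (splice p q j i \<tau> \<tau>') (splice p q j i k k')
     = (\<Sum>t<p. sg (\<tau> (skip j t)) * k (skip j t)) + (\<Sum>t<q. sg (\<tau>' (skip i t)) * k' (skip i t))"
  unfolding tdot_sg sum_lessThan_add by (intro arg_cong2[where f = "(+)"] sum.cong) (auto simp: splice_def)

lemma sg_cases: "sg b = 1 \<or> sg b = -1"
  unfolding sg_def by auto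

lemma sg_mult_self [simp]: "sg b * sg b = 1" "sg b * (sg b * x) = x"
  unfolding sg_def by simp_all

lemma sg_eq: "sg (a = b) = sg a * sg b"
  unfolding sg_def by auto

lemma sg_neq: "sg (a \<noteq> b) = - sg a * sg b"
  unfolding sg_def by auto

lemma KN_double_bounds: assumes "N \<ge> 1" "k \<in> KN N" shows "2 * k \<le> int N" "- int N < 2 * k"
  using assms unfolding KN_def KN_lo_def KN_hi_def by auto

lemma sg_mult_KN_bounds:
  assumes "N \<ge> 1" "k \<in> KN N"
  shows "- int N \<le> 2 * (sg b * k)" "2 * (sg b * k) \<le> int N"
    "2 * (sg b * k) = int N \<Longrightarrow> b \<and> 2 * k = int N"
  using KN_double_bounds[OF assms] unfolding sg_def by (cases b; auto)+

lemma KN_eq_if_congruent: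
  assumes N: "N \<ge> 1" and "a \<in> KN N" "b \<in> KN N" and x: "x = 1 \<or> x = -1"
    and "x * a + c = n * int N" "x * b + c = n' * int N"
  shows "a = b \<and> n = n'"
proof -
  have ab: "\<bar>a - b\<bar> < int N" using assms(2,3) KN_hi_eq[OF N] unfolding KN_def by auto
  have "x * (a - b) = (n - n') * int N" using assms(5,6) by (simp add: algebra_simps)
  then have "\<bar>x\<bar> * \<bar>a - b\<bar> = \<bar>n - n'\<bar> * int N" by (metis abs_mult abs_of_nat)
  then have "\<bar>a - b\<bar> = \<bar>n - n'\<bar> * int N" using x by auto
  moreover from this ab have "\<bar>n - n'\<bar> < 1" using N by (simp add: mult_less_cancel_right2)
  ultimately show ?thesis by simp
qed

lemma nlo_eq: "nlo m = - (int m div 2)"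
proof -
  have "nlo m = \<lfloor>real_of_int (1 - int m) / real_of_int 2\<rfloor>" unfolding nlo_def by (simp add: field_simps)
  also have "\<dots> = (1 - int m) div 2" by (rule floor_divide_of_int_eq)
  finally show ?thesis by linarith
qed

lemma nhi_eq: "nhi m = (int m - 1) div 2"
proof -
  have "nhi m = \<lfloor>real_of_int (int m - 1) / real_of_int 2\<rfloor>" unfolding nhi_def by simp
  also have "\<dots> = (int m - 1) div 2" by (rule floor_divide_of_int_eq)
  finally show ?thesis .
qed

text \<open>Since 2|k_t| \<le> N, tau.k = cN forces -m \<le> 2c \<le> m. The only such c outside
  the range of n is nhi m + 1, and it forces every term of tau.k to be extremal, in particular
  tau_0 = + and 2 k_0 = N.\<close>

lemma tdot_quotient_range:
  assumes N: "N \<ge> 1" and m: "m \<ge> 1" and k: "k \<in> {..<m} \<rightarrow>\<^sub>E KN N" and c: "tdot m \<tau> k = c * int N"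
  shows "nlo m \<le> c" "c \<le> nhi m + 1" "c > nhi m \<Longrightarrow> \<tau> 0 \<and> 2 * k 0 = int N"
proof -
  have kj: "k j \<in> KN N" if "j < m" for j using k that by auto
  have two_tdot: "2 * (c * int N) = (\<Sum>j<m. 2 * (sg (\<tau> j) * k j))"
    unfolding c[symmetric] tdot_sg by (simp add: sum_distrib_left)
  have "2 * (c * int N) \<le> int m * int N"
    unfolding two_tdot using sum_mono[of "{..<m}" "\<lambda>j. 2 * (sg (\<tau> j) * k j)" "\<lambda>_. int N"]
      sg_mult_KN_bounds(2)[OF N kj] by simp
  then have up: "2 * c \<le> int m" using N by (simp add: mult.assoc[symmetric])
  have "- (int m * int N) \<le> 2 * (c * int N)"
    unfolding two_tdot using sum_mono[of "{..<m}" "\<lambda>_. - int N" "\<lambda>j. 2 * (sg (\<tau> j) * k j)"]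
      sg_mult_KN_bounds(1)[OF N kj] by simp
  then have lo: "- int m \<le> 2 * c" using N
    by (metis minus_mult_left mult.assoc mult_le_cancel_right_pos of_nat_0_less_iff less_le_trans zero_less_one)
  show "nlo m \<le> c" unfolding nlo_eq using lo by linarith
  show "c \<le> nhi m + 1" unfolding nhi_eq using up by linarith
  assume "c > nhi m"
  then have "2 * c = int m" using up unfolding nhi_eq by linarith
  then have "(\<Sum>j<m. int N - 2 * (sg (\<tau> j) * k j)) = 0"
    using two_tdot by (simp add: sum_subtractf mult.assoc[symmetric])
  then have "\<forall>j\<in>{..<m}. int N - 2 * (sg (\<tau> j) * k j) = 0"
    by (subst sum_nonneg_eq_0_iff[symmetric]) (use sg_mult_KN_bounds(2)[OF N kj] in auto)
  then have "int N - 2 * (sg (\<tau> 0) * k 0) = 0" using m by simp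
  then have "2 * (sg (\<tau> 0) * k 0) = int N" by simp
  then show "\<tau> 0 \<and> 2 * k 0 = int N" using sg_mult_KN_bounds(3)[OF N kj] m by auto
qed

lemma tdot_flip_first:
  assumes "m \<ge> 1"
  shows "tdot m (\<tau>(0 := b)) k = tdot m \<tau> k - sg (\<tau> 0) * k 0 + sg b * k 0"
  using sum_lessThan_skip[of 0 m "\<lambda>j. sg ((\<tau>(0 := b)) j) * k j"]
    sum_lessThan_skip[of 0 m "\<lambda>j. sg (\<tau> j) * k j"] assms
  unfolding tdot_sg by (simp add: skip_def)

definition normalize_signs :: "nat \<Rightarrow> nat \<Rightarrow> (nat \<Rightarrow> bool) \<Rightarrow> (nat \<Rightarrow> int) \<Rightarrow> nat \<Rightarrow> bool" where
  "normalize_signs m N \<tau> k = (if tdot m \<tau> k div int N > nhi m then \<tau>(0 := \<not> \<tau> 0) else \<tau>)"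

lemma normalize_signs_signs: "\<tau> \<in> signs m \<Longrightarrow> m \<ge> 1 \<Longrightarrow> normalize_signs m N \<tau> k \<in> signs m"
  unfolding normalize_signs_def signs_def by (auto simp: PiE_iff extensional_def)

lemma normalize_signs_inj:
  assumes "normalize_signs m N \<tau> k = normalize_signs m N \<tau>' k'"
    and "(nhi m < tdot m \<tau> k div int N) = (nhi m < tdot m \<tau>' k' div int N)"
  shows "\<tau> = \<tau>'"
proof
  fix t
  have "normalize_signs m N \<tau> k t = normalize_signs m N \<tau>' k' t" using assms(1) by simp
  then show "\<tau> t = \<tau>' t"
    using assms(2) unfolding normalize_signs_def by (cases "t = 0") (auto split: if_splits)
qed

lemma normalize_signs_tdot:
  assumes N: "N \<ge> 1" and m: "m \<ge> 1" and k: "k \<in> {..<m} \<rightarrow>\<^sub>E KN N" and c: "tdot m \<tau> k = c * int N"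
  defines "c' \<equiv> tdot m (normalize_signs m N \<tau> k) k div int N"
  shows "tdot m (normalize_signs m N \<tau> k) k = c' * int N" "nlo m \<le> c'" "c' \<le> nhi m"
proof -
  have cd: "tdot m \<tau> k div int N = c" using c N by simp
  note range = tdot_quotient_range[OF N m k c]
  have "tdot m (normalize_signs m N \<tau> k) k = c' * int N \<and> nlo m \<le> c' \<and> c' \<le> nhi m"
  proof (cases "c > nhi m")
    case True
    then have t0: "\<tau> 0" "2 * k 0 = int N" using range(3) by auto
    have "tdot m (\<tau>(0 := False)) k = (c - 1) * int N"
      using tdot_flip_first[OF m, of \<tau> False k] t0 c by (simp add: sg_def algebra_simps)
    moreover have "nhi m \<ge> nlo m" unfolding nhi_eq nlo_eq using m by presburger
    ultimately show ?thesis
      unfolding c'_def normalize_signs_def cd using True t0 range N by simp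
  next
    case False
    then show ?thesis unfolding c'_def normalize_signs_def cd using c range N by simp
  qed
  then show "tdot m (normalize_signs m N \<tau> k) k = c' * int N" "nlo m \<le> c'" "c' \<le> nhi m"
    by auto
qed

context
  fixes K m1 m2 :: real and N :: nat
  assumes N: "N \<ge> 1"
begin

definition mode_var :: "bool \<Rightarrow> bool \<Rightarrow> int \<Rightarrow> point \<Rightarrow> complex" where
  "mode_var \<sigma> l k = (if \<sigma> then xi K m1 m2 N l k else eta K m1 m2 N l k)"

definition mode_bracket ::
  "bool \<Rightarrow> bool \<Rightarrow> int \<Rightarrow> bool \<Rightarrow> bool \<Rightarrow> int \<Rightarrow> complex" where
  "mode_bracket \<sigma> l k \<sigma>' l' k' =
     (if \<sigma> \<noteq> \<sigma>' \<and> l = l' \<and> k = k'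
      then (if \<sigma> then 1 else -1) * \<i> * complex_of_real (omega K m1 m2 N l k) else 0)"

lemma xi_lincomb: "xi K m1 m2 N l k = (\<lambda>z. (1 / complex_of_real (sqrt 2)) * z (Pv k l) +
    (\<i> * complex_of_real (omega K m1 m2 N l k) / complex_of_real (sqrt 2)) * z (Qv (red N (- k)) l))"
  unfolding xi_def by (simp add: fun_eq_iff add_divide_distrib)

lemma eta_lincomb: "eta K m1 m2 N l k = (\<lambda>z. (1 / complex_of_real (sqrt 2)) * z (Pv (red N (- k)) l) +
    (- (\<i> * complex_of_real (omega K m1 m2 N l k)) / complex_of_real (sqrt 2)) * z (Qv k l))"
  unfolding eta_def by (simp add: fun_eq_iff diff_divide_distrib)

lemma coordwise_differentiable_lincomb2: "coordwise_differentiable (\<lambda>z. a * z w1 + b * z w2)"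
  by (auto intro!: coordwise_differentiable_add coordwise_differentiable_cmult)

lemma pd_lincomb2:
  "pd v (\<lambda>z. a * z w1 + b * z w2) z = a * (if v = w1 then 1 else 0) + b * (if v = w2 then 1 else 0)"
  by (subst pd_add) (auto intro: coordwise_differentiable_cmult simp: pd_cmult pd_coord)

lemma coordwise_differentiable_mode_var: "coordwise_differentiable (mode_var \<sigma> l k)"
  unfolding mode_var_def xi_lincomb eta_lincomb
  by (cases \<sigma>) (simp_all only: if_True if_False coordwise_differentiable_lincomb2)

lemma pd_Pv_xi: "pd (Pv k0 l0) (xi K m1 m2 N l k) z =
    (if k0 = k \<and> l0 = l then 1 / complex_of_real (sqrt 2) else 0)"
  unfolding xi_lincomb pd_lincomb2 by auto

lemma pd_Qv_xi: "pd (Qv k0 l0) (xi K m1 m2 N l k) z =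
    (if k0 = red N (- k) \<and> l0 = l
     then \<i> * complex_of_real (omega K m1 m2 N l k) / complex_of_real (sqrt 2) else 0)"
  unfolding xi_lincomb pd_lincomb2 by auto

lemma pd_Pv_eta: "pd (Pv k0 l0) (eta K m1 m2 N l k) z =
    (if k0 = red N (- k) \<and> l0 = l then 1 / complex_of_real (sqrt 2) else 0)"
  unfolding eta_lincomb pd_lincomb2 by auto

lemma pd_Qv_eta: "pd (Qv k0 l0) (eta K m1 m2 N l k) z =
    (if k0 = k \<and> l0 = l then - (\<i> * complex_of_real (omega K m1 m2 N l k)) / complex_of_real (sqrt 2) else 0)"
  unfolding eta_lincomb pd_lincomb2 by auto

lemma sum_KN_bool_indicator_mult:
  "(\<Sum>k\<in>KN N. \<Sum>l\<in>(UNIV :: bool set). (if k = a \<and> l = b then x else 0) * (if k = c \<and> l = d then y else 0))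
   = (if a = c \<and> b = d \<and> a \<in> KN N then x * y else (0::complex))"
proof -
  have "(\<Sum>k\<in>KN N. \<Sum>l\<in>(UNIV :: bool set). (if k = a \<and> l = b then x else 0) * (if k = c \<and> l = d then y else 0))
    = (\<Sum>k\<in>KN N. if k = a then (if a = c \<and> b = d then x * y else 0) else 0)"
    by (rule sum.cong) (auto simp: UNIV_bool)
  also have "\<dots> = (if a = c \<and> b = d \<and> a \<in> KN N then x * y else 0)"
    by (auto simp: sum.delta)
  finally show ?thesis .
qed

lemma sqrt2_complex_square: "complex_of_real (sqrt 2) * complex_of_real (sqrt 2) = 2"
  by (simp flip: of_real_mult)

lemma mult_divide_sqrt2_complex:
  "(1 / complex_of_real (sqrt 2)) * (c / complex_of_real (sqrt 2)) = c / 2"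
  "(c / complex_of_real (sqrt 2)) * (1 / complex_of_real (sqrt 2)) = c / 2"
  using sqrt2_complex_square by (simp_all add: field_simps)

lemma pbracket_mode_var:
  assumes k: "k \<in> KN N" and k': "k' \<in> KN N"
  shows "pbracket N (mode_var \<sigma> l k) (mode_var \<sigma>' l' k') z
       = mode_bracket \<sigma> l k \<sigma>' l' k'"
proof -
  have "red N (- k) \<in> KN N" "red N (- k') \<in> KN N" using red_in_KN[OF N] by auto
  moreover have "omega K m1 m2 N l' k = omega K m1 m2 N l' k'" if "k = red N (- k')"
    using omega_red_minus N that by blast
  moreover note red_minus_eq_iff[OF N k k'] red_minus_eq_swap[OF N k k'] omega_red_minus[OF N]
  ultimately show ?thesis
    unfolding pbracket_def sum_subtractf mode_var_def mode_bracket_def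
    by (cases \<sigma>; cases \<sigma>';
        simp only: if_True if_False pd_Pv_xi pd_Qv_xi pd_Pv_eta pd_Qv_eta sum_KN_bool_indicator_mult;
        simp add: k k' mult_divide_sqrt2_complex sqrt2_complex_square)
qed

type_synonym mono_index = "(nat \<Rightarrow> bool) \<times> (nat \<Rightarrow> bool) \<times> (nat \<Rightarrow> int) \<times> (nat \<Rightarrow> bool) \<times> int"

definition mono_indices :: "nat \<Rightarrow> mono_index set" where
  "mono_indices s = signs s \<times> signs s \<times> ktuples N s \<times> signs s \<times> {nlo s .. nhi s}"

definition scale :: "nat \<Rightarrow> complex" where
  "scale s = complex_of_real (real N powr (- (real s - 2) / 2))"

definition coeff_at :: "nat \<Rightarrow> coeffs \<Rightarrow> mono_index \<Rightarrow> complex" where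
  "coeff_at s F = (\<lambda>(\<sigma>, \<tau>, k, l, n). F \<sigma> \<tau> l n (kvec N s k) * complex_of_real (delta_n N n (tdot s \<tau> k)))"

definition monomial :: "nat \<Rightarrow> mono_index \<Rightarrow> point \<Rightarrow> complex" where
  "monomial s = (\<lambda>(\<sigma>, \<tau>, k, l, n). Xi K m1 m2 N s \<sigma> k l)"

lemma finite_ktuples [simp]: "finite (ktuples N s)"
  unfolding ktuples_def by (intro finite_PiE) auto

lemma finite_mono_indices [simp]: "finite (mono_indices s)"
  unfolding mono_indices_def signs_def by (intro finite_cartesian_product finite_PiE) auto

lemma polyP_eq_sum_monomials:
  "polyP K m1 m2 N s F = (\<lambda>z. \<Sum>x\<in>mono_indices s. (scale s * coeff_at s F x) * monomial s x z)"
proof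
  fix z
  show "polyP K m1 m2 N s F z = (\<Sum>x\<in>mono_indices s. (scale s * coeff_at s F x) * monomial s x z)"
    unfolding polyP_def mono_indices_def coeff_at_def monomial_def scale_def
    by (simp add: sum.cartesian_product sum_distrib_left ac_simps) (rule sum.cong; clarsimp simp: ac_simps)
qed

lemma Xi_eq_prod: "Xi K m1 m2 N s \<sigma> k l = (\<lambda>z. \<Prod>j<s. mode_var (\<sigma> j) (l j) (k j) z)"
  unfolding Xi_def mode_var_def by (rule ext) (rule prod.cong, auto)

lemma coordwise_differentiable_monomial: "coordwise_differentiable (monomial s x)"
  unfolding monomial_def
  by (cases x) (simp add: Xi_eq_prod coordwise_differentiable_prod coordwise_differentiable_mode_var)

section \<open>Contracting two monomials\<close>

type_synonym contraction = "mono_index \<times> mono_index \<times> nat \<times> nat"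

definition contractions :: "nat \<Rightarrow> nat \<Rightarrow> contraction set" where
  "contractions s r = mono_indices s \<times> mono_indices r \<times> {..<s} \<times> {..<r}"

text \<open>Multiplying the signs of the first block by -tau_j tau'_i merges the two momentum
  constraints into one, see tdot_contracted_signs.\<close>

definition contract :: "nat \<Rightarrow> nat \<Rightarrow> contraction \<Rightarrow> mono_index" where
  "contract s r = (\<lambda>((\<sigma>, \<tau>, k, l, n), (\<sigma>', \<tau>', k', l', n'), j, i).
     let k'' = splice (s - 1) (r - 1) j i k k';
         \<tau>'' = normalize_signs (r + s - 2) N (splice (s - 1) (r - 1) j i (\<lambda>t. (\<tau> j = \<tau>' i) \<noteq> \<tau> t) \<tau>') k''
     in (splice (s - 1) (r - 1) j i \<sigma> \<sigma>', \<tau>'', k'', splice (s - 1) (r - 1) j i l l',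
         tdot (r + s - 2) \<tau>'' k'' div int N))"

definition contraction_weight :: "nat \<Rightarrow> nat \<Rightarrow> coeffs \<Rightarrow> coeffs \<Rightarrow> contraction \<Rightarrow> complex" where
  "contraction_weight s r F G = (\<lambda>((\<sigma>, \<tau>, k, l, n), (\<sigma>', \<tau>', k', l', n'), j, i).
     coeff_at s F (\<sigma>, \<tau>, k, l, n) * coeff_at r G (\<sigma>', \<tau>', k', l', n') *
     mode_bracket (\<sigma> j) (l j) (k j) (\<sigma>' i) (l' i) (k' i))"

lemma finite_contractions [simp]: "finite (contractions s r)"
  unfolding contractions_def by simp

lemma monomial_contract:
  assumes "s \<ge> 1" "r \<ge> 1" "j < s" "i < r"
  shows "monomial (r + s - 2) (contract s r ((\<sigma>, \<tau>, k, l, n), (\<sigma>', \<tau>', k', l', n'), j, i)) z =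
    (\<Prod>t\<in>{..<s} - {j}. mode_var (\<sigma> t) (l t) (k t) z) * (\<Prod>t\<in>{..<r} - {i}. mode_var (\<sigma>' t) (l' t) (k' t) z)"
proof -
  have m: "r + s - 2 = (s - 1) + (r - 1)" using assms by simp
  show ?thesis
    unfolding monomial_def contract_def Let_def m prod_remove_skip[OF assms(3)] prod_remove_skip[OF assms(4)]
      Xi_eq_prod prod.case prod_lessThan_add
    by (intro arg_cong2[where f = "(*)"] prod.cong) (auto simp: splice_def)
qed

lemma pbracket_monomial:
  assumes "s \<ge> 1" "r \<ge> 1" and x: "(\<sigma>, \<tau>, k, l, n) \<in> mono_indices s" and x': "(\<sigma>', \<tau>', k', l', n') \<in> mono_indices r"
  shows "pbracket N (monomial s (\<sigma>, \<tau>, k, l, n)) (monomial r (\<sigma>', \<tau>', k', l', n')) z =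
    (\<Sum>j<s. \<Sum>i<r. mode_bracket (\<sigma> j) (l j) (k j) (\<sigma>' i) (l' i) (k' i) *
        monomial (r + s - 2) (contract s r ((\<sigma>, \<tau>, k, l, n), (\<sigma>', \<tau>', k', l', n'), j, i)) z)"
proof -
  have k: "k j \<in> KN N" if "j < s" for j using x that unfolding mono_indices_def ktuples_def by auto
  have k': "k' i \<in> KN N" if "i < r" for i using x' that unfolding mono_indices_def ktuples_def by auto
  have "pbracket N (monomial s (\<sigma>, \<tau>, k, l, n)) (monomial r (\<sigma>', \<tau>', k', l', n')) z =
    (\<Sum>j<s. \<Sum>i<r. pbracket N (mode_var (\<sigma> j) (l j) (k j)) (mode_var (\<sigma>' i) (l' i) (k' i)) z *
        (\<Prod>t\<in>{..<s} - {j}. mode_var (\<sigma> t) (l t) (k t) z) * (\<Prod>t\<in>{..<r} - {i}. mode_var (\<sigma>' t) (l' t) (k' t) z))"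
    unfolding monomial_def by (simp add: Xi_eq_prod pbracket_prod coordwise_differentiable_mode_var)
  also have "\<dots> = (\<Sum>j<s. \<Sum>i<r. mode_bracket (\<sigma> j) (l j) (k j) (\<sigma>' i) (l' i) (k' i) *
        monomial (r + s - 2) (contract s r ((\<sigma>, \<tau>, k, l, n), (\<sigma>', \<tau>', k', l', n'), j, i)) z)"
    by (intro sum.cong refl) (simp add: pbracket_mode_var k k' monomial_contract[OF assms(1,2)] mult.assoc)
  finally show ?thesis .
qed

lemma pbracket_polyP_eq_sum_contractions:
  assumes "s \<ge> 1" "r \<ge> 1"
  shows "pbracket N (polyP K m1 m2 N s F) (polyP K m1 m2 N r G) z =
    scale s * scale r * (\<Sum>p\<in>contractions s r. contraction_weight s r F G p * monomial (r + s - 2) (contract s r p) z)"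
proof -
  have "pbracket N (polyP K m1 m2 N s F) (polyP K m1 m2 N r G) z =
   (\<Sum>x\<in>mono_indices s. \<Sum>x'\<in>mono_indices r. (scale s * coeff_at s F x) * (scale r * coeff_at r G x') *
       pbracket N (monomial s x) (monomial r x') z)"
    unfolding polyP_eq_sum_monomials by (rule pbracket_lincomb) (auto simp: coordwise_differentiable_monomial)
  also have "\<dots> = (\<Sum>x\<in>mono_indices s. \<Sum>x'\<in>mono_indices r. \<Sum>j<s. \<Sum>i<r.
     scale s * scale r * (contraction_weight s r F G (x, x', j, i) * monomial (r + s - 2) (contract s r (x, x', j, i)) z))"
  proof (intro sum.cong refl)
    fix x x' assume "x \<in> mono_indices s" "x' \<in> mono_indices r"
    then show "(scale s * coeff_at s F x) * (scale r * coeff_at r G x') * pbracket N (monomial s x) (monomial r x') z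
      = (\<Sum>j<s. \<Sum>i<r. scale s * scale r *
          (contraction_weight s r F G (x, x', j, i) * monomial (r + s - 2) (contract s r (x, x', j, i)) z))"
      by (cases x, cases x') (simp add: pbracket_monomial[OF assms] contraction_weight_def sum_distrib_left ac_simps)
  qed
  also have "\<dots> = scale s * scale r *
      (\<Sum>p\<in>contractions s r. contraction_weight s r F G p * monomial (r + s - 2) (contract s r p) z)"
    unfolding contractions_def sum_distrib_left by (simp add: sum.cartesian_product)
  finally show ?thesis .
qed

lemma scale_mult:
  assumes "s \<ge> 1" "r \<ge> 1"
  shows "scale s * scale r = scale (r + s - 2)"
proof -
  have "- (real s - 2) / 2 + - (real r - 2) / 2 = - (real (r + s - 2) - 2) / 2"
    using assms by (simp add: of_nat_diff field_simps)
  then show ?thesis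
    unfolding scale_def of_real_mult[symmetric] powr_add[symmetric] by (simp only:)
qed

lemma contraction_weight_nonzeroD:
  assumes "contraction_weight s r F G ((\<sigma>, \<tau>, k, l, n), (\<sigma>', \<tau>', k', l', n'), j, i) \<noteq> 0"
  shows "tdot s \<tau> k = n * int N" "tdot r \<tau>' k' = n' * int N"
    "\<sigma>' i = (\<not> \<sigma> j)" "l' i = l j" "k' i = k j" "omega K m1 m2 N (l j) (k j) \<noteq> 0"
  using assms unfolding contraction_weight_def coeff_at_def mode_bracket_def delta_n_def
  by (auto split: if_splits)

lemma tdot_contracted_signs:
  assumes "s \<ge> 1" "r \<ge> 1" and j: "j < s" and i: "i < r"
    and "tdot s \<tau> k = n * int N" "tdot r \<tau>' k' = n' * int N" "k' i = k j"
  shows "tdot (r + s - 2) (splice (s - 1) (r - 1) j i (\<lambda>t. (\<tau> j = \<tau>' i) \<noteq> \<tau> t) \<tau>')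
           (splice (s - 1) (r - 1) j i k k') = (n' - sg (\<tau> j) * sg (\<tau>' i) * n) * int N"
proof -
  have m: "r + s - 2 = (s - 1) + (r - 1)" using assms by simp
  have A: "(\<Sum>t<s - 1. sg (\<tau> (skip j t)) * k (skip j t)) = n * int N - sg (\<tau> j) * k j"
    using assms(5) sum_lessThan_skip[OF j, of "\<lambda>t. sg (\<tau> t) * k t"] unfolding tdot_sg by simp
  have B: "(\<Sum>t<r - 1. sg (\<tau>' (skip i t)) * k' (skip i t)) = n' * int N - sg (\<tau>' i) * k' i"
    using assms(6) sum_lessThan_skip[OF i, of "\<lambda>t. sg (\<tau>' t) * k' t"] unfolding tdot_sg by simp
  have "(\<Sum>t<s - 1. sg ((\<tau> j = \<tau>' i) \<noteq> \<tau> (skip j t)) * k (skip j t))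
     = - sg (\<tau> j) * sg (\<tau>' i) * (\<Sum>t<s - 1. sg (\<tau> (skip j t)) * k (skip j t))"
    unfolding sg_neq sg_eq sum_distrib_left by (intro sum.cong refl) (simp add: algebra_simps)
  then show ?thesis
    unfolding m tdot_splice A B assms(7) by (simp add: algebra_simps)
qed

lemma contract_mem:
  assumes s: "s \<ge> 1" and r: "r \<ge> 1" and rs: "r + s \<ge> 3"
    and p: "p \<in> contractions s r" and nz: "contraction_weight s r F G p \<noteq> 0"
  shows "contract s r p \<in> mono_indices (r + s - 2)"
    and "case contract s r p of (\<sigma>, \<tau>, k, l, n) \<Rightarrow> tdot (r + s - 2) \<tau> k = n * int N"
proof -
  obtain \<sigma> \<tau> k l n \<sigma>' \<tau>' k' l' n' j i where p_eq: "p = ((\<sigma>, \<tau>, k, l, n), (\<sigma>', \<tau>', k', l', n'), j, i)"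
    by (cases p) auto
  define m where "m = r + s - 2"
  have m: "m = (s - 1) + (r - 1)" "m \<ge> 1" using s r rs unfolding m_def by auto
  note W = contraction_weight_nonzeroD[OF nz[unfolded p_eq]]
  have j: "j < s" and i: "i < r" and k: "k \<in> {..<s} \<rightarrow>\<^sub>E KN N" and k': "k' \<in> {..<r} \<rightarrow>\<^sub>E KN N"
    using p unfolding p_eq contractions_def mono_indices_def ktuples_def by auto
  define k'' where "k'' = splice (s - 1) (r - 1) j i k k'"
  define \<tau>0 where "\<tau>0 = splice (s - 1) (r - 1) j i (\<lambda>t. (\<tau> j = \<tau>' i) \<noteq> \<tau> t) \<tau>'"
  have k'': "k'' \<in> {..<m} \<rightarrow>\<^sub>E KN N"
    unfolding k''_def m(1) using k k' skip_less[OF j] skip_less[OF i] by (intro splice_PiE) auto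
  have splice_signs: "splice (s - 1) (r - 1) j i a b \<in> signs m" for a b :: "nat \<Rightarrow> bool"
    unfolding signs_def m(1) by (rule splice_PiE) auto
  have "tdot m \<tau>0 k'' = (n' - sg (\<tau> j) * sg (\<tau>' i) * n) * int N"
    unfolding m_def \<tau>0_def k''_def by (rule tdot_contracted_signs[OF s r j i W(1,2,5)])
  note normal = normalize_signs_tdot[OF N m(2) k'' this]
  have contract_eq: "contract s r p = (splice (s - 1) (r - 1) j i \<sigma> \<sigma>', normalize_signs m N \<tau>0 k'', k'',
      splice (s - 1) (r - 1) j i l l', tdot m (normalize_signs m N \<tau>0 k'') k'' div int N)"
    unfolding p_eq contract_def Let_def m_def k''_def \<tau>0_def by simp
  show "contract s r p \<in> mono_indices (r + s - 2)"
    unfolding contract_eq m_def[symmetric] mono_indices_def ktuples_def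
    using splice_signs normalize_signs_signs[OF splice_signs[unfolded \<tau>0_def[symmetric]] m(2)]
      k'' normal(2,3) by (auto simp: \<tau>0_def)
  show "case contract s r p of (\<sigma>, \<tau>, k, l, n) \<Rightarrow> tdot (r + s - 2) \<tau> k = n * int N"
    unfolding contract_eq m_def[symmetric] using normal(1) by simp
qed

definition contraction_fiber :: "nat \<Rightarrow> nat \<Rightarrow> coeffs \<Rightarrow> coeffs \<Rightarrow> mono_index \<Rightarrow> contraction set" where
  "contraction_fiber s r F G x = {p \<in> contractions s r. contraction_weight s r F G p \<noteq> 0 \<and> contract s r p = x}"

definition contracted_coeff :: "nat \<Rightarrow> nat \<Rightarrow> coeffs \<Rightarrow> coeffs \<Rightarrow> mono_index \<Rightarrow> complex" where
  "contracted_coeff s r F G x = (\<Sum>p\<in>contraction_fiber s r F G x. contraction_weight s r F G p)"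

lemma sum_contractions_regroup:
  assumes "s \<ge> 1" "r \<ge> 1" "r + s \<ge> 3"
  shows "(\<Sum>p\<in>contractions s r. contraction_weight s r F G p * monomial (r + s - 2) (contract s r p) z)
       = (\<Sum>x\<in>mono_indices (r + s - 2). contracted_coeff s r F G x * monomial (r + s - 2) x z)"
proof -
  define P where "P = {p \<in> contractions s r. contraction_weight s r F G p \<noteq> 0}"
  have "contract s r ` P \<subseteq> mono_indices (r + s - 2)"
    using contract_mem(1)[OF assms] unfolding P_def by auto
  then have "(\<Sum>p\<in>P. contraction_weight s r F G p * monomial (r + s - 2) (contract s r p) z)
      = (\<Sum>x\<in>mono_indices (r + s - 2). \<Sum>p\<in>{p \<in> P. contract s r p = x}.
           contraction_weight s r F G p * monomial (r + s - 2) (contract s r p) z)"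
    by (intro sum.group[symmetric]) (auto simp: P_def)
  also have "\<dots> = (\<Sum>x\<in>mono_indices (r + s - 2). contracted_coeff s r F G x * monomial (r + s - 2) x z)"
    unfolding contracted_coeff_def contraction_fiber_def sum_distrib_right P_def
    by (intro sum.cong refl) auto
  finally show ?thesis
    by (subst sum.mono_neutral_right[of "contractions s r" P]) (auto simp: P_def)
qed

lemma contracted_coeff_momentum:
  assumes "s \<ge> 1" "r \<ge> 1" "r + s \<ge> 3"
  shows "contracted_coeff s r F G (\<sigma>, \<tau>, k, l, n) * complex_of_real (delta_n N n (tdot (r + s - 2) \<tau> k))
       = contracted_coeff s r F G (\<sigma>, \<tau>, k, l, n)"
proof (cases "contraction_fiber s r F G (\<sigma>, \<tau>, k, l, n) = {}")
  case False
  then obtain p where "p \<in> contractions s r" "contraction_weight s r F G p \<noteq> 0" "contract s r p = (\<sigma>, \<tau>, k, l, n)"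
    unfolding contraction_fiber_def by auto
  then have "tdot (r + s - 2) \<tau> k = n * int N"
    using contract_mem(2)[OF assms] by fastforce
  then show ?thesis unfolding delta_n_def by simp
qed (simp add: contracted_coeff_def)

section \<open>Continuous coefficients of the bracket\<close>

definition tent :: "nat \<Rightarrow> (nat \<Rightarrow> int) \<Rightarrow> (nat \<Rightarrow> real) \<Rightarrow> real" where
  "tent m k0 x = (\<Prod>t<m. max 0 (1 - \<bar>real N * x t - real_of_int (k0 t)\<bar>))"

lemma continuous_on_tent: "continuous_on S (tent m k0)"
  unfolding tent_def
  by (intro continuous_intros continuous_on_product_then_coordinatewise[OF continuous_on_id])

lemma tent_kvec:
  assumes k0: "k0 \<in> ktuples N m" and k: "k \<in> ktuples N m"
  shows "tent m k0 (kvec N m k) = (if k0 = k then 1 else 0)"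
proof -
  have Nk: "real N * kvec N m k t = real_of_int (k t)" if "t < m" for t
    using N that unfolding kvec_def by simp
  show ?thesis
  proof (cases "k0 = k")
    case False
    then obtain t where t: "t < m" "k0 t \<noteq> k t"
      using k0 k unfolding ktuples_def by (metis PiE_ext lessThan_iff)
    then have "(1::int) \<le> \<bar>k t - k0 t\<bar>" by linarith
    then have "1 \<le> \<bar>real_of_int (k t) - real_of_int (k0 t)\<bar>"
      by (metis of_int_1_le_iff of_int_abs of_int_diff)
    then have "max 0 (1 - \<bar>real N * kvec N m k t - real_of_int (k0 t)\<bar>) = 0" using Nk[OF t(1)] by simp
    then show ?thesis unfolding tent_def using t False by (auto intro: prod_zero)
  qed (simp add: tent_def Nk)
qed

definition bracket_coeffs :: "nat \<Rightarrow> nat \<Rightarrow> coeffs \<Rightarrow> coeffs \<Rightarrow> coeffs" where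
  "bracket_coeffs s r F G = (\<lambda>\<sigma> \<tau> l n x. \<Sum>k0\<in>ktuples N (r + s - 2).
     complex_of_real (tent (r + s - 2) k0 x) * contracted_coeff s r F G (\<sigma>, \<tau>, k0, l, n))"

lemma is_coeffs_bracket_coeffs: "is_coeffs (r + s - 2) (bracket_coeffs s r F G)"
  unfolding is_coeffs_def bracket_coeffs_def by (intro allI continuous_intros continuous_on_tent)

lemma bracket_coeffs_kvec:
  assumes k: "k \<in> ktuples N (r + s - 2)"
  shows "bracket_coeffs s r F G \<sigma> \<tau> l n (kvec N (r + s - 2) k) = contracted_coeff s r F G (\<sigma>, \<tau>, k, l, n)"
proof -
  have "bracket_coeffs s r F G \<sigma> \<tau> l n (kvec N (r + s - 2) k) =
     (\<Sum>k0\<in>ktuples N (r + s - 2). if k0 = k then contracted_coeff s r F G (\<sigma>, \<tau>, k0, l, n) else 0)"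
    unfolding bracket_coeffs_def by (intro sum.cong refl) (simp add: tent_kvec[OF _ k])
  also have "\<dots> = contracted_coeff s r F G (\<sigma>, \<tau>, k, l, n)"
    using k by (simp add: sum.delta')
  finally show ?thesis .
qed

lemma pbracket_polyP:
  assumes "s \<ge> 1" "r \<ge> 1" "r + s \<ge> 3"
  shows "pbracket N (polyP K m1 m2 N s F) (polyP K m1 m2 N r G)
       = polyP K m1 m2 N (r + s - 2) (bracket_coeffs s r F G)"
proof
  fix z
  have "pbracket N (polyP K m1 m2 N s F) (polyP K m1 m2 N r G) z
     = scale (r + s - 2) * (\<Sum>x\<in>mono_indices (r + s - 2). contracted_coeff s r F G x * monomial (r + s - 2) x z)"
    unfolding pbracket_polyP_eq_sum_contractions[OF assms(1,2)] sum_contractions_regroup[OF assms]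
      scale_mult[OF assms(1,2)] ..
  also have "\<dots> = (\<Sum>x\<in>mono_indices (r + s - 2).
      (scale (r + s - 2) * coeff_at (r + s - 2) (bracket_coeffs s r F G) x) * monomial (r + s - 2) x z)"
    unfolding sum_distrib_left
  proof (intro sum.cong refl)
    fix x assume "x \<in> mono_indices (r + s - 2)"
    then show "scale (r + s - 2) * (contracted_coeff s r F G x * monomial (r + s - 2) x z)
      = (scale (r + s - 2) * coeff_at (r + s - 2) (bracket_coeffs s r F G) x) * monomial (r + s - 2) x z"
      by (cases x) (simp add: mono_indices_def coeff_at_def bracket_coeffs_kvec contracted_coeff_momentum[OF assms])
  qed
  also have "\<dots> = polyP K m1 m2 N (r + s - 2) (bracket_coeffs s r F G) z"
    unfolding polyP_eq_sum_monomials ..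
  finally show "pbracket N (polyP K m1 m2 N s F) (polyP K m1 m2 N r G) z
      = polyP K m1 m2 N (r + s - 2) (bracket_coeffs s r F G) z" .
qed

section \<open>Counting the contractions with a given result\<close>

definition contraction_label :: "nat \<Rightarrow> nat \<Rightarrow> contraction \<Rightarrow> nat \<times> nat \<times> bool \<times> bool \<times> bool \<times> bool \<times> bool" where
  "contraction_label s r = (\<lambda>((\<sigma>, \<tau>, k, l, n), (\<sigma>', \<tau>', k', l', n'), j, i). (j, i, \<sigma> j, l j, \<tau> j, \<tau>' i,
     nhi (r + s - 2) < tdot (r + s - 2) (splice (s - 1) (r - 1) j i (\<lambda>t. (\<tau> j = \<tau>' i) \<noteq> \<tau> t) \<tau>')
       (splice (s - 1) (r - 1) j i k k') div int N))"

lemma contraction_label_inj_on: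
  assumes "s \<ge> 1" "r \<ge> 1"
  shows "inj_on (contraction_label s r) (contraction_fiber s r F G x)"
proof (rule inj_onI)
  fix p q assume p: "p \<in> contraction_fiber s r F G x" and q: "q \<in> contraction_fiber s r F G x"
    and label: "contraction_label s r p = contraction_label s r q"
  obtain \<sigma> \<tau> k l n \<sigma>' \<tau>' k' l' n' j i where p_eq: "p = ((\<sigma>, \<tau>, k, l, n), (\<sigma>', \<tau>', k', l', n'), j, i)"
    by (cases p) auto
  obtain \<sigma>b \<tau>b kb lb nb \<sigma>b' \<tau>b' kb' lb' nb' jb ib
    where q_eq: "q = ((\<sigma>b, \<tau>b, kb, lb, nb), (\<sigma>b', \<tau>b', kb', lb', nb'), jb, ib)"
    by (cases q) auto
  have "jb = j" "ib = i" using label unfolding p_eq q_eq contraction_label_def by simp_all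
  then have q_eq: "q = ((\<sigma>b, \<tau>b, kb, lb, nb), (\<sigma>b', \<tau>b', kb', lb', nb'), j, i)" using q_eq by simp
  have I: "\<sigma>b j = \<sigma> j" "lb j = l j" "\<tau>b j = \<tau> j" "\<tau>b' i = \<tau>' i"
    using label unfolding p_eq q_eq contraction_label_def by simp_all
  have WP: "contraction_weight s r F G ((\<sigma>, \<tau>, k, l, n), (\<sigma>', \<tau>', k', l', n'), j, i) \<noteq> 0"
    and WQ: "contraction_weight s r F G ((\<sigma>b, \<tau>b, kb, lb, nb), (\<sigma>b', \<tau>b', kb', lb', nb'), j, i) \<noteq> 0"
    and contract_eq: "contract s r p = contract s r q"
    using p q unfolding p_eq q_eq contraction_fiber_def by auto
  note WP = contraction_weight_nonzeroD[OF WP] and WQ = contraction_weight_nonzeroD[OF WQ]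
  have j: "j < s" and i: "i < r" and k: "k \<in> {..<s} \<rightarrow>\<^sub>E KN N" "kb \<in> {..<s} \<rightarrow>\<^sub>E KN N"
    and k': "k' \<in> {..<r} \<rightarrow>\<^sub>E KN N" "kb' \<in> {..<r} \<rightarrow>\<^sub>E KN N"
    and \<sigma>: "\<sigma> \<in> signs s" "\<tau> \<in> signs s" "l \<in> signs s" "\<sigma>b \<in> signs s" "\<tau>b \<in> signs s" "lb \<in> signs s"
    and \<sigma>': "\<sigma>' \<in> signs r" "\<tau>' \<in> signs r" "l' \<in> signs r" "\<sigma>b' \<in> signs r" "\<tau>b' \<in> signs r" "lb' \<in> signs r"
    using p q unfolding p_eq q_eq contraction_fiber_def contractions_def mono_indices_def ktuples_def
    by auto
  let ?sp = "splice (s - 1) (r - 1) j i"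
  let ?\<tau>0 = "?sp (\<lambda>t. (\<tau> j = \<tau>' i) \<noteq> \<tau> t) \<tau>'" and ?\<tau>0b = "?sp (\<lambda>t. (\<tau> j = \<tau>' i) \<noteq> \<tau>b t) \<tau>b'"
  have flip: "(nhi (r + s - 2) < tdot (r + s - 2) ?\<tau>0 (?sp k k') div int N)
    = (nhi (r + s - 2) < tdot (r + s - 2) ?\<tau>0b (?sp kb kb') div int N)"
    using label unfolding p_eq q_eq contraction_label_def prod.case prod.inject I by blast
  have O: "?sp \<sigma> \<sigma>' = ?sp \<sigma>b \<sigma>b'" "?sp k k' = ?sp kb kb'" "?sp l l' = ?sp lb lb'"
      "normalize_signs (r + s - 2) N ?\<tau>0 (?sp k k') = normalize_signs (r + s - 2) N ?\<tau>0b (?sp kb kb')"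
    using contract_eq unfolding p_eq q_eq contract_def Let_def prod.case prod.inject I by blast+
  note \<tau>0 = normalize_signs_inj[OF O(4) flip]
  have \<tau>: "\<tau> = \<tau>b"
  proof (rule PiE_eq_by_skip[OF \<sigma>(2,5)[unfolded signs_def] j])
    fix t assume "t < s - 1"
    then have "((\<tau> j = \<tau>' i) \<noteq> \<tau> (skip j t)) = ((\<tau> j = \<tau>' i) \<noteq> \<tau>b (skip j t))"
      by (rule splice_eqD(1)[OF \<tau>0])
    then show "\<tau> (skip j t) = \<tau>b (skip j t)" by blast
  qed (simp add: I)
  have \<tau>': "\<tau>' = \<tau>b'"
    by (rule PiE_eq_by_skip[OF \<sigma>'(2,5)[unfolded signs_def] i]) (simp_all add: I splice_eqD(2)[OF \<tau>0])
  have "\<sigma> = \<sigma>b" "\<sigma>' = \<sigma>b'"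
    by (rule splice_inj[OF O(1) \<sigma>(1,4)[unfolded signs_def] \<sigma>'(1,4)[unfolded signs_def] j i];
        simp add: I WP(3) WQ(3))+
  moreover have "l = lb" "l' = lb'"
    by (rule splice_inj[OF O(3) \<sigma>(3,6)[unfolded signs_def] \<sigma>'(3,6)[unfolded signs_def] j i];
        simp add: I WP(4) WQ(4))+
  moreover have kj: "k j = kb j \<and> n = nb"
  proof (rule KN_eq_if_congruent[OF N _ _ sg_cases])
    define A where "A = (\<Sum>t<s - 1. sg (\<tau> (skip j t)) * k (skip j t))"
    have A': "A = (\<Sum>t<s - 1. sg (\<tau>b (skip j t)) * kb (skip j t))"
      unfolding A_def \<tau> using splice_eqD(1)[OF O(2)] by simp
    show "sg (\<tau> j) * k j + A = n * int N"
      using WP(1) sum_lessThan_skip[OF j, of "\<lambda>t. sg (\<tau> t) * k t"] unfolding tdot_sg A_def by simp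
    show "sg (\<tau> j) * kb j + A = nb * int N"
      using WQ(1) sum_lessThan_skip[OF j, of "\<lambda>t. sg (\<tau>b t) * kb t"] unfolding tdot_sg A' I by simp
  qed (use k j in auto)
  moreover have "k = kb" "k' = kb'"
    by (rule splice_inj[OF O(2) k k' j i]; simp add: kj WP(5) WQ(5))+
  moreover from this have "n' = nb'"
    using WP(2) WQ(2) \<tau>' N by simp
  ultimately show "p = q" unfolding p_eq q_eq using \<tau> \<tau>' kj by simp
qed

lemma mono_indices_1_zero: "(\<sigma>, \<tau>, k, l, n) \<in> mono_indices 1 \<Longrightarrow> n = 0"
  unfolding mono_indices_def using nlo_eq[of 1] nhi_eq[of 1] by simp

lemma contraction_plus_mode:
  assumes "m1 > 0" "m2 > 0" and rs: "min r s = 1"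
    and p: "((\<sigma>, \<tau>, k, l, n), (\<sigma>', \<tau>', k', l', n'), j, i) \<in> contractions s r"
    and nz: "contraction_weight s r F G ((\<sigma>, \<tau>, k, l, n), (\<sigma>', \<tau>', k', l', n'), j, i) \<noteq> 0"
  shows "l j"
proof -
  note W = contraction_weight_nonzeroD[OF nz]
  have ji: "j < s" "i < r" and x: "(\<sigma>, \<tau>, k, l, n) \<in> mono_indices s" and x': "(\<sigma>', \<tau>', k', l', n') \<in> mono_indices r"
    using p unfolding contractions_def by auto
  have "k j = 0"
  proof (cases "s = 1")
    case True
    then have "n = 0" "j = 0" using mono_indices_1_zero x ji by auto
    then show ?thesis using W(1) True unfolding tdot_sg sg_def by (simp split: if_splits)
  next
    case False
    then have "r = 1" using rs by linarith
    then have "n' = 0" "i = 0" using mono_indices_1_zero x' ji by auto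
    then show ?thesis using W(2,5) \<open>r = 1\<close> unfolding tdot_sg sg_def by (simp split: if_splits)
  qed
  then show "l j" using W(6) omega_minus_zero[OF assms(1,2)] by (cases "l j") auto
qed

lemma card_contraction_fiber:
  assumes "s \<ge> 1" "r \<ge> 1" "m1 > 0" "m2 > 0"
  shows "card (contraction_fiber s r F G x) \<le> 16 * r * s * min r s"
proof -
  define L where "L = (if min r s = 1 then {True} else (UNIV :: bool set))"
  define D where "D = {..<s} \<times> {..<r} \<times> (UNIV :: bool set) \<times> L \<times> (UNIV :: bool set) \<times> (UNIV :: bool set) \<times> (UNIV :: bool set)"
  have "contraction_label s r ` contraction_fiber s r F G x \<subseteq> D"
  proof
    fix y assume "y \<in> contraction_label s r ` contraction_fiber s r F G x"
    then obtain p where p: "p \<in> contraction_fiber s r F G x" and y: "y = contraction_label s r p" by auto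
    obtain \<sigma> \<tau> k l n \<sigma>' \<tau>' k' l' n' j i where p_eq: "p = ((\<sigma>, \<tau>, k, l, n), (\<sigma>', \<tau>', k', l', n'), j, i)"
      by (cases p) auto
    have pc: "p \<in> contractions s r" and nz: "contraction_weight s r F G p \<noteq> 0"
      using p unfolding contraction_fiber_def by auto
    have "j < s" "i < r" using pc unfolding p_eq contractions_def by auto
    moreover have "l j \<in> L"
      using contraction_plus_mode[OF assms(3,4) _ pc[unfolded p_eq] nz[unfolded p_eq]] unfolding L_def by auto
    ultimately show "y \<in> D" unfolding y p_eq D_def contraction_label_def by simp
  qed
  then have "card (contraction_fiber s r F G x) \<le> card D"
    by (intro card_inj_on_le[OF contraction_label_inj_on[OF assms(1,2)]]) (simp_all add: D_def L_def)
  also have "card D = 16 * (s * r * card L)"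
    unfolding D_def by (simp add: card_cartesian_product card_UNIV_bool)
  also have "card L \<le> min r s"
    unfolding L_def using assms(1,2) by (auto simp: card_UNIV_bool)
  finally show ?thesis by (simp add: ac_simps)
qed

section \<open>The norm estimate\<close>

lemma norm_mode_bracket_le:
  assumes "m1 > 0" "m2 > 0" "K > 0"
  shows "cmod (mode_bracket \<sigma> l k \<sigma>' l' k') \<le> sqrt (2 * K * (m1 + m2) / (m1 * m2))"
proof -
  have "0 \<le> sqrt (2 * K * (m1 + m2) / (m1 * m2))" using omega_bounds[OF assms, of N l k] by linarith
  then show ?thesis using omega_bounds[OF assms, of N l k] unfolding mode_bracket_def by (auto simp: norm_mult)
qed

lemma normplus_nonneg: "0 \<le> normplus N s F"
  unfolding normplus_def by (rule Max_ge) (simp_all add: mono_indices_def[symmetric])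

lemma norm_coeff_at_le: assumes "x \<in> mono_indices s" shows "cmod (coeff_at s F x) \<le> normplus N s F"
proof -
  obtain \<sigma> \<tau> k l n where x: "x = (\<sigma>, \<tau>, k, l, n)" by (cases x)
  have "cmod (coeff_at s F x) = cmod (F \<sigma> \<tau> l n (kvec N s k)) * delta_n N n (tdot s \<tau> k)"
    unfolding x coeff_at_def delta_n_def by (simp add: norm_mult)
  also have "\<dots> \<le> normplus N s F"
    unfolding normplus_def mono_indices_def[symmetric]
    by (rule Max_ge) (use assms x in \<open>auto intro!: image_eqI[where x = "(\<sigma>, \<tau>, k, l, n)"]\<close>)
  finally show ?thesis .
qed

lemma norm_contraction_weight_le:
  assumes "m1 > 0" "m2 > 0" "K > 0" and p: "p \<in> contractions s r"
  shows "cmod (contraction_weight s r F G p)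
    \<le> sqrt (2 * K * (m1 + m2) / (m1 * m2)) * normplus N s F * normplus N r G"
proof -
  obtain x x' j i where p_eq: "p = (x, x', j, i)" by (cases p) auto
  obtain \<sigma> \<tau> k l n \<sigma>' \<tau>' k' l' n' where x: "x = (\<sigma>, \<tau>, k, l, n)" and x': "x' = (\<sigma>', \<tau>', k', l', n')"
    by (cases x, cases x') auto
  have "x \<in> mono_indices s" "x' \<in> mono_indices r" using p p_eq unfolding contractions_def by auto
  then have "cmod (coeff_at s F x) * cmod (coeff_at r G x') * cmod (mode_bracket (\<sigma> j) (l j) (k j) (\<sigma>' i) (l' i) (k' i))
      \<le> normplus N s F * normplus N r G * sqrt (2 * K * (m1 + m2) / (m1 * m2))"
    by (intro mult_mono norm_coeff_at_le norm_mode_bracket_le assms normplus_nonneg mult_nonneg_nonneg norm_ge_zero)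
  then show ?thesis
    unfolding p_eq x x' contraction_weight_def by (simp add: norm_mult ac_simps)
qed

lemma norm_contracted_coeff_le:
  assumes "s \<ge> 1" "r \<ge> 1" "m1 > 0" "m2 > 0" "K > 0"
  shows "cmod (contracted_coeff s r F G x) \<le> 16 * real r * real s * real (min r s) *
     (sqrt (2 * K * (m1 + m2) / (m1 * m2)) * normplus N s F * normplus N r G)"
proof -
  let ?B = "sqrt (2 * K * (m1 + m2) / (m1 * m2)) * normplus N s F * normplus N r G"
  have "cmod (contracted_coeff s r F G x) \<le> (\<Sum>p\<in>contraction_fiber s r F G x. cmod (contraction_weight s r F G p))"
    unfolding contracted_coeff_def by (rule norm_sum)
  also have "\<dots> \<le> (\<Sum>p\<in>contraction_fiber s r F G x. ?B)"
    by (rule sum_mono) (use norm_contraction_weight_le[OF assms(3-5)] in \<open>auto simp: contraction_fiber_def\<close>)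
  also have "\<dots> = real (card (contraction_fiber s r F G x)) * ?B" by simp
  also have "\<dots> \<le> (16 * real r * real s * real (min r s)) * ?B"
  proof (rule mult_right_mono)
    have "real (card (contraction_fiber s r F G x)) \<le> real (16 * r * s * min r s)"
      using card_contraction_fiber[OF assms(1-4)] by (simp only: of_nat_le_iff)
    then show "real (card (contraction_fiber s r F G x)) \<le> 16 * real r * real s * real (min r s)"
      by simp
    show "0 \<le> ?B" using assms(3-5) by (intro mult_nonneg_nonneg real_sqrt_ge_zero normplus_nonneg) simp
  qed
  finally show ?thesis .
qed

lemma normplus_bracket_coeffs_le:
  assumes "s \<ge> 1" "r \<ge> 1" "m1 > 0" "m2 > 0" "K > 0"
  shows "normplus N (r + s - 2) (bracket_coeffs s r F G)
    \<le> 2^4 * sqrt (2 * K * (m1 + m2) / (m1 * m2)) * real r * real s * real (min r s) * normplus N s F * normplus N r G"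
    (is "_ \<le> ?R")
proof -
  have R0: "0 \<le> ?R"
    using assms(3-5) by (intro mult_nonneg_nonneg real_sqrt_ge_zero normplus_nonneg) simp_all
  have "cmod (bracket_coeffs s r F G \<sigma> \<tau> l n (kvec N (r + s - 2) k)) * delta_n N n (tdot (r + s - 2) \<tau> k) \<le> ?R"
    if "k \<in> ktuples N (r + s - 2)" for \<sigma> \<tau> k l n
  proof -
    have "cmod (bracket_coeffs s r F G \<sigma> \<tau> l n (kvec N (r + s - 2) k)) * delta_n N n (tdot (r + s - 2) \<tau> k)
        \<le> cmod (contracted_coeff s r F G (\<sigma>, \<tau>, k, l, n))"
      unfolding bracket_coeffs_kvec[OF that] delta_n_def by simp
    also have "\<dots> \<le> 16 * real r * real s * real (min r s) *
        (sqrt (2 * K * (m1 + m2) / (m1 * m2)) * normplus N s F * normplus N r G)"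
      by (rule norm_contracted_coeff_le[OF assms])
    also have "\<dots> = ?R" by (simp add: ac_simps)
    finally show ?thesis .
  qed
  then show ?thesis
    unfolding normplus_def[of N "r + s - 2" "bracket_coeffs s r F G"] using R0
    by (intro Max.boundedI) (auto simp: finite_mono_indices[unfolded mono_indices_def])
qed

end

theorem lemma1:
  fixes N r s :: nat and K m1 m2 :: real and F G :: coeffs
  assumes "N \<ge> 1" and "m1 > m2" and "m2 > 0" and "K > 0"
    and "r \<ge> 1" and "s \<ge> 1" and "r + s \<ge> 3"
    and "is_coeffs s F" and "is_coeffs r G"
  shows "\<exists>H. is_coeffs (r + s - 2) H
           \<and> pbracket N (polyP K m1 m2 N s F) (polyP K m1 m2 N r G) = polyP K m1 m2 N (r + s - 2) H
           \<and> normplus N (r + s - 2) H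
               \<le> 2^4 * sqrt (2 * K * (m1 + m2) / (m1 * m2)) * real r * real s * real (min r s)
                   * normplus N s F * normplus N r G"
proof (intro exI conjI)
  have masses: "m1 > 0" "m2 > 0" "K > 0" using assms(2-4) by linarith+
  note N = assms(1) and rs = assms(6,5,7)
  show "is_coeffs (r + s - 2) (bracket_coeffs K m1 m2 N s r F G)"
    by (rule is_coeffs_bracket_coeffs[OF N])
  show "pbracket N (polyP K m1 m2 N s F) (polyP K m1 m2 N r G)
      = polyP K m1 m2 N (r + s - 2) (bracket_coeffs K m1 m2 N s r F G)"
    by (rule pbracket_polyP[OF N rs])
  show "normplus N (r + s - 2) (bracket_coeffs K m1 m2 N s r F G)
      \<le> 2^4 * sqrt (2 * K * (m1 + m2) / (m1 * m2)) * real r * real s * real (min r s)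
          * normplus N s F * normplus N r G"
    by (rule normplus_bracket_coeffs_le[OF N rs(1,2) masses])
qed

end
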